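(* Let $N\ge 2$, let $T_N$ be the homogeneous tree in which every vertex has degree $N$, and fix a root $o$. Let $m>1$ and $(p,q)\in G_4=\{(p,q): p<0,\ q=m-1\}$. Then for every $\lambda>0$ there exists a weight $\mu$ on $T_N$ such that $$W_o(n)\asymp e^{\lambda n}\quad\text{for } n\ge 2,$$ and the inequality $\Delta_m u+u^p|\nabla u|^q\le 0$ on $T_N$ admits a nontrivial positive solution.
   Context: A weight on a graph $(V,E)$ is a symmetric function $\mu:V\times V\to[0,\infty)$ with $\mu_{xy}=\mu_{yx}>0$ if and only if $x\sim y$ (adjacent); $\mu(x)=\sum_{y\sim x}\mu_{xy}$. For $m>1$, $\Delta_m u(x)=\frac{1}{\mu(x)}\sum_{y\sim x}\mu_{xy}|u(y)-u(x)|^{m-2}(u(y)-u(x))$ and $|\nabla u(x)|=\big(\sum_{y\sim x}\frac{\mu_{xy}}{2\mu(x)}(u(y)-u(x))^2\big)^{1/2}$. $d$ is the graph distance, $B(o,n)=\{x: d(o,x)\le n\}$, $W_o(n)=\sum_{x\in B(o,n),\,y\in V,\,d(o,x)<d(o,y)}\mu_{xy}$. $f(n)\asymp g(n)$ for $n\ge2$ means there are constants $c,C>0$ with $c\,g(n)\le f(n)\le C\,g(n)$ for all $n\ge 2$. A nontrivial positive solution is a non-constant $u:V\to(0,\infty)$ with $\Delta_m u(x)+u(x)^p|\nabla u(x)|^q\le0$ for all $x\in V$. *)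

theory Defs
  imports Complex_Main
begin

definition nbrs :: "'v set \<Rightarrow> ('v \<Rightarrow> 'v \<Rightarrow> bool) \<Rightarrow> 'v \<Rightarrow> 'v set" where
  "nbrs V adj x = {y \<in> V. adj x y}"

definition is_weight :: "'v set \<Rightarrow> ('v \<Rightarrow> 'v \<Rightarrow> bool) \<Rightarrow> ('v \<Rightarrow> 'v \<Rightarrow> real) \<Rightarrow> bool" where
  "is_weight V adj mu \<longleftrightarrow>
     (\<forall>x\<in>V. \<forall>y\<in>V. mu x y = mu y x \<and> mu x y \<ge> 0 \<and> (mu x y > 0 \<longleftrightarrow> adj x y))"

definition vmeas :: "'v set \<Rightarrow> ('v \<Rightarrow> 'v \<Rightarrow> bool) \<Rightarrow> ('v \<Rightarrow> 'v \<Rightarrow> real) \<Rightarrow> 'v \<Rightarrow> real" where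
  "vmeas V adj mu x = (\<Sum>y\<in>nbrs V adj x. mu x y)"

definition m_laplacian :: "'v set \<Rightarrow> ('v \<Rightarrow> 'v \<Rightarrow> bool) \<Rightarrow> ('v \<Rightarrow> 'v \<Rightarrow> real) \<Rightarrow> real
     \<Rightarrow> ('v \<Rightarrow> real) \<Rightarrow> 'v \<Rightarrow> real" where
  "m_laplacian V adj mu m u x =
     (1 / vmeas V adj mu x) *
     (\<Sum>y\<in>nbrs V adj x. mu x y * \<bar>u y - u x\<bar> powr (m - 2) * (u y - u x))"

definition grad_norm :: "'v set \<Rightarrow> ('v \<Rightarrow> 'v \<Rightarrow> bool) \<Rightarrow> ('v \<Rightarrow> 'v \<Rightarrow> real)
     \<Rightarrow> ('v \<Rightarrow> real) \<Rightarrow> 'v \<Rightarrow> real" where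
  "grad_norm V adj mu u x =
     sqrt (\<Sum>y\<in>nbrs V adj x. mu x y / (2 * vmeas V adj mu x) * (u y - u x)\<^sup>2)"

inductive walk :: "'v set \<Rightarrow> ('v \<Rightarrow> 'v \<Rightarrow> bool) \<Rightarrow> nat \<Rightarrow> 'v \<Rightarrow> 'v \<Rightarrow> bool"
  for V adj where
  walk0: "x \<in> V \<Longrightarrow> walk V adj 0 x x"
| walkS: "x \<in> V \<Longrightarrow> adj x z \<Longrightarrow> walk V adj n z y \<Longrightarrow> walk V adj (Suc n) x y"

definition gdist :: "'v set \<Rightarrow> ('v \<Rightarrow> 'v \<Rightarrow> bool) \<Rightarrow> 'v \<Rightarrow> 'v \<Rightarrow> nat" where
  "gdist V adj x y = (LEAST n. walk V adj n x y)"

definition gball :: "'v set \<Rightarrow> ('v \<Rightarrow> 'v \<Rightarrow> bool) \<Rightarrow> 'v \<Rightarrow> nat \<Rightarrow> 'v set" where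
  "gball V adj r n = {x \<in> V. gdist V adj r x \<le> n}"

text \<open>W_o(n): sum of mu_xy over x in B(o,n), y in V with d(o,x) < d(o,y).
  Since mu_xy = 0 unless x ~ y, it suffices to let y range over the neighbours of x
  (this keeps the index set finite).\<close>
definition W_out :: "'v set \<Rightarrow> ('v \<Rightarrow> 'v \<Rightarrow> bool) \<Rightarrow> ('v \<Rightarrow> 'v \<Rightarrow> real) \<Rightarrow> 'v \<Rightarrow> nat \<Rightarrow> real" where
  "W_out V adj mu r n =
     (\<Sum>x\<in>gball V adj r n. \<Sum>y\<in>{y \<in> nbrs V adj x. gdist V adj r x < gdist V adj r y}. mu x y)"

definition asymp_n2 :: "(nat \<Rightarrow> real) \<Rightarrow> (nat \<Rightarrow> real) \<Rightarrow> bool" where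
  "asymp_n2 f g \<longleftrightarrow> (\<exists>c C. c > 0 \<and> C > 0 \<and> (\<forall>n\<ge>2. c * g n \<le> f n \<and> f n \<le> C * g n))"

definition nontrivial_pos_solution :: "'v set \<Rightarrow> ('v \<Rightarrow> 'v \<Rightarrow> bool) \<Rightarrow> ('v \<Rightarrow> 'v \<Rightarrow> real)
     \<Rightarrow> real \<Rightarrow> real \<Rightarrow> real \<Rightarrow> ('v \<Rightarrow> real) \<Rightarrow> bool" where
  "nontrivial_pos_solution V adj mu m p q u \<longleftrightarrow>
     (\<forall>x\<in>V. u x > 0) \<and> (\<exists>x\<in>V. \<exists>y\<in>V. u x \<noteq> u y) \<and>
     (\<forall>x\<in>V. m_laplacian V adj mu m u x + u x powr p * grad_norm V adj mu u x powr q \<le> 0)"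

text \<open>Vertices: the root [] and words a_1 ... a_k with a_1 < N and a_i < N - 1 for i \<ge> 2;
  x ~ y iff one is the other extended by one letter. Root has N children,
  every other vertex has one parent and N-1 children, so every degree is N.\<close>
definition tree_V :: "nat \<Rightarrow> nat list set" where
  "tree_V N = {xs. xs = [] \<or> (xs ! 0 < N \<and> (\<forall>i. 0 < i \<and> i < length xs \<longrightarrow> xs ! i < N - 1))}"

definition tree_adj :: "nat list \<Rightarrow> nat list \<Rightarrow> bool" where
  "tree_adj x y \<longleftrightarrow> (\<exists>a. y = x @ [a]) \<or> (\<exists>a. x = y @ [a])"

end

theory Submission
  imports Defs
begin

(*
  The weight is chosen so that the edges between the spheres of radius k and k + 1 carry total
  mass 2 e^(lam k): half of it on the edge of the ray 0^k -- 0^(k+1), the other half shared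
  equally by the remaining edges. Hence W_o(n) = sum_(j <= n) 2 e^(lam j), which is comparable
  to e^(lam n).

  The solution is u(x) = A + e^(-c l(x)), where l(x) is the number of leading zeros of the word
  x and c (m - 1) = lam / 2. Off the ray, u is constant on every neighbourhood, so there
  Delta_m u and |grad u| vanish. At the ray vertex 0^k only the two ray neighbours see another
  value of u; with d = 1 - e^(-c), the child term dominates and gives
  Delta_m u <= -(1 - e^(-lam/2)) e^(-lam k/2) d^(m-1) / 3, while |grad u|^(m-1) is at most
  e^(-lam (k-1)/2) d^(m-1). As p < 0 we have u^p <= A^p, and A^p = (e^(lam/2) - 1) / (3 e^lam)
  makes the two terms cancel.
*)

lemma m_laplacian_eq_0_if_const_nbrs:
  "(\<And>y. y \<in> nbrs V adj x \<Longrightarrow> u y = u x) \<Longrightarrow> m_laplacian V adj mu m u x = 0"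
  by (simp add: m_laplacian_def)

lemma grad_norm_eq_0_if_const_nbrs:
  "(\<And>y. y \<in> nbrs V adj x \<Longrightarrow> u y = u x) \<Longrightarrow> grad_norm V adj mu u x = 0"
  by (simp add: grad_norm_def)

lemma grad_norm_nonneg:
  assumes "\<And>y. y \<in> nbrs V adj x \<Longrightarrow> mu x y \<ge> 0"
  shows "grad_norm V adj mu u x \<ge> 0"
proof -
  have "vmeas V adj mu x \<ge> 0"
    unfolding vmeas_def using assms by (simp add: sum_nonneg)
  then show ?thesis
    unfolding grad_norm_def using assms by (simp add: sum_nonneg)
qed

lemma grad_norm_le:
  assumes "\<And>y. y \<in> nbrs V adj x \<Longrightarrow> mu x y \<ge> 0 \<and> \<bar>u y - u x\<bar> \<le> B" and "B \<ge> 0"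
  shows "grad_norm V adj mu u x \<le> B"
proof -
  let ?vm = "vmeas V adj mu x"
  have vm: "?vm = (\<Sum>y\<in>nbrs V adj x. mu x y)"
    by (simp add: vmeas_def)
  have "?vm \<ge> 0"
    unfolding vm using assms(1) by (simp add: sum_nonneg)
  have "(\<Sum>y\<in>nbrs V adj x. mu x y / (2 * ?vm) * (u y - u x)\<^sup>2)
      \<le> (\<Sum>y\<in>nbrs V adj x. mu x y / (2 * ?vm) * B\<^sup>2)"
  proof (rule sum_mono)
    fix y assume y: "y \<in> nbrs V adj x"
    have "(u y - u x)\<^sup>2 \<le> B\<^sup>2"
      using assms y by (metis abs_le_square_iff abs_of_nonneg)
    moreover have "mu x y / (2 * ?vm) \<ge> 0"
      using assms(1)[OF y] \<open>?vm \<ge> 0\<close> by simp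
    ultimately show "mu x y / (2 * ?vm) * (u y - u x)\<^sup>2 \<le> mu x y / (2 * ?vm) * B\<^sup>2"
      by (rule mult_left_mono)
  qed
  also have "\<dots> = B\<^sup>2 * (?vm / (2 * ?vm))"
    by (simp add: vm sum_divide_distrib[symmetric] sum_distrib_right[symmetric] algebra_simps)
  also have "\<dots> \<le> B\<^sup>2"
    by (cases "?vm = 0") simp_all
  finally show ?thesis
    unfolding grad_norm_def using assms(2) real_sqrt_le_mono by fastforce
qed

lemma abs_powr_mult_self:
  fixes d m :: real
  shows "\<bar>d\<bar> powr (m - 2) * d = sgn d * \<bar>d\<bar> powr (m - 1)"
proof -
  have "\<bar>d\<bar> powr (m - 1) = \<bar>d\<bar> powr (m - 2) * \<bar>d\<bar>"
    using powr_add[of "\<bar>d\<bar>" "m - 2" 1] by simp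
  then show ?thesis
    by (metis mult.left_commute sgn_mult_abs)
qed

section \<open>The homogeneous tree\<close>

lemma tree_V_appendD: "xs @ ys \<in> tree_V N \<Longrightarrow> xs \<in> tree_V N"
  unfolding tree_V_def by (cases "xs = []") (auto simp: nth_append)

lemma butlast_in_tree_V: "x \<in> tree_V N \<Longrightarrow> butlast x \<in> tree_V N"
  by (cases x rule: rev_cases) (auto dest: tree_V_appendD)

lemma set_subset_if_tree_V: "x \<in> tree_V N \<Longrightarrow> set x \<subseteq> {..<N}"
  unfolding tree_V_def by (auto simp: in_set_conv_nth) (metis diff_le_self gr0I order_less_le_trans)

lemma butlast_replicate_Suc: "butlast (replicate (Suc j) a) = replicate j a"
  by (metis butlast_snoc replicate_Suc replicate_append_same)

lemma replicate_in_tree_V: "N \<ge> 2 \<Longrightarrow> replicate k 0 \<in> tree_V N"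
  by (cases k) (auto simp: tree_V_def)

definition tree_level :: "nat \<Rightarrow> nat \<Rightarrow> nat list set" where
  "tree_level N k = {y \<in> tree_V N. length y = k}"

lemma finite_tree_level: "finite (tree_level N k)"
proof (rule finite_subset)
  show "tree_level N k \<subseteq> {xs. set xs \<subseteq> {..<N} \<and> length xs = k}"
    using set_subset_if_tree_V by (auto simp: tree_level_def)
qed (rule finite_lists_length_eq, simp)

lemma card_tree_level_ge_2:
  assumes "N \<ge> 2" and "k \<ge> 1"
  shows "card (tree_level N k) \<ge> 2"
proof -
  have "{replicate k 0, 1 # replicate (k - 1) 0} \<subseteq> tree_level N k"
    using assms replicate_in_tree_V[of N k]
    by (auto simp: tree_level_def tree_V_def nth_Cons split: nat.splits)
  moreover have "replicate k 0 \<noteq> 1 # replicate (k - 1) (0::nat)"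
    using assms(2) by (cases k) auto
  ultimately show ?thesis
    using card_mono[OF finite_tree_level] by (metis card_2_iff)
qed

lemma walk_tree_length_le: "walk V tree_adj n x y \<Longrightarrow> length y \<le> length x + n"
  by (induction rule: walk.induct) (auto simp: tree_adj_def)

lemma walk_tree_append:
  "xs @ ys \<in> tree_V N \<Longrightarrow> walk (tree_V N) tree_adj (length ys) xs (xs @ ys)"
proof (induction ys arbitrary: xs)
  case Nil
  then show ?case by (auto intro: walk0)
next
  case (Cons a ys)
  have "walk (tree_V N) tree_adj (length ys) (xs @ [a]) (xs @ a # ys)"
    using Cons by (metis append.assoc append_Cons append_Nil)
  moreover have "xs \<in> tree_V N"
    using Cons.prems tree_V_appendD by blast
  moreover have "tree_adj xs (xs @ [a])"
    by (simp add: tree_adj_def)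
  ultimately show ?case
    using walkS by fastforce
qed

lemma gdist_tree_root: "x \<in> tree_V N \<Longrightarrow> gdist (tree_V N) tree_adj [] x = length x"
  unfolding gdist_def
proof (rule Least_equality)
  show "x \<in> tree_V N \<Longrightarrow> walk (tree_V N) tree_adj (length x) [] x"
    using walk_tree_append[of "[]" x] by simp
qed (use walk_tree_length_le in fastforce)

definition tree_children :: "nat \<Rightarrow> nat list \<Rightarrow> nat list set" where
  "tree_children N x = {y \<in> tree_V N. \<exists>a. y = x @ [a]}"

lemma tree_children_subset_level: "tree_children N x \<subseteq> tree_level N (Suc (length x))"
  by (auto simp: tree_children_def tree_level_def)

lemma finite_tree_children: "finite (tree_children N x)"
  using finite_subset[OF tree_children_subset_level finite_tree_level] .

lemma nbrs_tree:
  assumes "x \<in> tree_V N"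
  shows "nbrs (tree_V N) tree_adj x = tree_children N x \<union> (if x = [] then {} else {butlast x})"
proof -
  have "(\<exists>a. x = y @ [a]) \<longleftrightarrow> x \<noteq> [] \<and> y = butlast x" for y
    by (cases x rule: rev_cases) auto
  then show ?thesis
    using butlast_in_tree_V[OF assms] by (auto simp: nbrs_def tree_adj_def tree_children_def)
qed

lemma sum_nbrs_tree:
  assumes "x \<in> tree_V N"
  shows "(\<Sum>y\<in>nbrs (tree_V N) tree_adj x. g y)
    = (\<Sum>y\<in>tree_children N x. g y) + (if x = [] then 0 else g (butlast x))"
proof -
  have "butlast x \<notin> tree_children N x"
    by (auto simp: tree_children_def dest: arg_cong[where f = length])
  then show ?thesis
    by (simp add: nbrs_tree[OF assms] finite_tree_children add.commute)
qed

lemma outward_nbrs_tree: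
  assumes "x \<in> tree_V N"
  shows "{y \<in> nbrs (tree_V N) tree_adj x. gdist (tree_V N) tree_adj [] x < gdist (tree_V N) tree_adj [] y}
    = tree_children N x"
proof -
  have "gdist (tree_V N) tree_adj [] y = length y" if "y \<in> nbrs (tree_V N) tree_adj x" for y
    using that by (simp add: nbrs_def gdist_tree_root)
  then have "{y \<in> nbrs (tree_V N) tree_adj x. gdist (tree_V N) tree_adj [] x < gdist (tree_V N) tree_adj [] y}
      = {y \<in> nbrs (tree_V N) tree_adj x. length x < length y}"
    using gdist_tree_root[OF assms] by auto
  also have "\<dots> = tree_children N x"
    unfolding nbrs_tree[OF assms] by (auto simp: tree_children_def)
  finally show ?thesis .
qed

lemma sum_tree_level_children:
  "(\<Sum>x\<in>tree_level N j. \<Sum>y\<in>tree_children N x. f y) = (\<Sum>y\<in>tree_level N (Suc j). f y)"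
proof -
  have snoc: "y = butlast y @ [last y]" if "y \<in> tree_level N (Suc j)" for y
    using that by (cases y rule: rev_cases) (auto simp: tree_level_def)
  have "tree_children N x = {y \<in> tree_level N (Suc j). butlast y = x}"
    if "x \<in> tree_level N j" for x
    using that snoc by (auto simp: tree_children_def tree_level_def)
  moreover have "butlast ` tree_level N (Suc j) \<subseteq> tree_level N j"
  proof
    fix x assume "x \<in> butlast ` tree_level N (Suc j)"
    then obtain y where "y \<in> tree_level N (Suc j)" and "x = butlast y" by blast
    then show "x \<in> tree_level N j"
      using snoc tree_V_appendD[of x "[last y]"] by (auto simp: tree_level_def)
  qed
  ultimately show ?thesis
    using sum.group[OF finite_tree_level finite_tree_level, of butlast N "Suc j" N j f] by simp
qed

section \<open>Weights determined by the outer endpoint of an edge\<close>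

definition child_weight :: "(nat list \<Rightarrow> real) \<Rightarrow> nat list \<Rightarrow> nat list \<Rightarrow> real" where
  "child_weight f x y = (if tree_adj x y then f (if length x < length y then y else x) else 0)"

lemma is_weight_child_weight:
  assumes pos: "\<And>y. y \<in> tree_V N \<Longrightarrow> y \<noteq> [] \<Longrightarrow> f y > 0"
  shows "is_weight (tree_V N) tree_adj (child_weight f)"
  unfolding is_weight_def
proof (intro ballI conjI)
  fix x y
  assume x: "x \<in> tree_V N" and y: "y \<in> tree_V N"
  have sym: "tree_adj y x = tree_adj x y"
    by (auto simp: tree_adj_def)
  have lengths: "length x < length y \<or> length y < length x" if "tree_adj x y"
    using that by (auto simp: tree_adj_def)
  show "child_weight f x y = child_weight f y x"
    using lengths by (auto simp: child_weight_def sym)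
  have "child_weight f x y > 0" if "tree_adj x y"
  proof (cases "length x < length y")
    case True
    then have "y \<noteq> []"
      by auto
    with that True pos[OF y] show ?thesis
      by (simp add: child_weight_def)
  next
    case False
    then have "x \<noteq> []"
      using lengths[OF that] by auto
    with that False pos[OF x] show ?thesis
      by (simp add: child_weight_def)
  qed
  then show "child_weight f x y > 0 \<longleftrightarrow> tree_adj x y"
    by (auto simp: child_weight_def)
  then show "child_weight f x y \<ge> 0"
    by (auto simp: child_weight_def)
qed

lemma child_weight_child: "y \<in> tree_children N x \<Longrightarrow> child_weight f x y = f y"
  by (auto simp: tree_children_def child_weight_def tree_adj_def)

lemma child_weight_parent: "x \<noteq> [] \<Longrightarrow> child_weight f x (butlast x) = f x"
  by (cases x rule: rev_cases) (auto simp: child_weight_def tree_adj_def)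

lemma vmeas_child_weight:
  assumes "x \<in> tree_V N"
  shows "vmeas (tree_V N) tree_adj (child_weight f) x
    = (\<Sum>y\<in>tree_children N x. f y) + (if x = [] then 0 else f x)"
  by (simp add: vmeas_def sum_nbrs_tree[OF assms] child_weight_child child_weight_parent)

lemma W_out_child_weight:
  "W_out (tree_V N) tree_adj (child_weight f) [] n = (\<Sum>j\<le>n. \<Sum>y\<in>tree_level N (Suc j). f y)"
proof -
  let ?B = "{x \<in> tree_V N. length x \<le> n}"
  have "W_out (tree_V N) tree_adj (child_weight f) [] n = (\<Sum>x\<in>?B. \<Sum>y\<in>tree_children N x. f y)"
    unfolding W_out_def gball_def
  proof (rule sum.cong)
    show "{x \<in> tree_V N. gdist (tree_V N) tree_adj [] x \<le> n} = ?B"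
      by (auto simp: gdist_tree_root)
  next
    fix x assume x: "x \<in> ?B"
    have "(\<Sum>y\<in>tree_children N x. child_weight f x y) = (\<Sum>y\<in>tree_children N x. f y)"
      by (rule sum.cong[OF refl child_weight_child])
    moreover have "x \<in> tree_V N"
      using x by simp
    ultimately show "(\<Sum>y\<in>{y \<in> nbrs (tree_V N) tree_adj x. gdist (tree_V N) tree_adj [] x < gdist (tree_V N) tree_adj [] y}. child_weight f x y)
        = (\<Sum>y\<in>tree_children N x. f y)"
      by (simp only: outward_nbrs_tree)
  qed
  also have "\<dots> = (\<Sum>j\<le>n. \<Sum>x\<in>{x \<in> ?B. length x = j}. \<Sum>y\<in>tree_children N x. f y)"
  proof (rule sum.group[symmetric])
    show "finite ?B"
      by (rule finite_subset[OF _ finite_lists_length_le[of "{..<N}" n]])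
        (use set_subset_if_tree_V in auto)
  qed auto
  also have "\<dots> = (\<Sum>j\<le>n. \<Sum>x\<in>tree_level N j. \<Sum>y\<in>tree_children N x. f y)"
  proof (rule sum.cong[OF refl])
    fix j assume "j \<in> {..n}"
    then have "{x \<in> ?B. length x = j} = tree_level N j"
      by (auto simp: tree_level_def)
    then show "(\<Sum>x\<in>{x \<in> ?B. length x = j}. \<Sum>y\<in>tree_children N x. f y)
        = (\<Sum>x\<in>tree_level N j. \<Sum>y\<in>tree_children N x. f y)"
      by (simp only:)
  qed
  also have "\<dots> = (\<Sum>j\<le>n. \<Sum>y\<in>tree_level N (Suc j). f y)"
    by (simp only: sum_tree_level_children)
  finally show ?thesis .
qed

section \<open>Exponential growth of the outward edge mass\<close>

definition ray_weight :: "nat \<Rightarrow> real \<Rightarrow> nat list \<Rightarrow> real" where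
  "ray_weight N lam y = exp (lam * (real (length y) - 1)) /
     (if y = replicate (length y) 0 then 1 else real (card (tree_level N (length y))) - 1)"

lemma ray_weight_pos:
  assumes "N \<ge> 2"
  shows "ray_weight N lam y > 0"
proof (cases "y = replicate (length y) 0")
  case False
  then have "y \<noteq> []"
    by auto
  then have "card (tree_level N (length y)) \<ge> 2"
    using card_tree_level_ge_2[OF assms, of "length y"] by (simp add: Suc_le_eq)
  with False show ?thesis
    by (simp add: ray_weight_def)
qed (simp add: ray_weight_def)

lemma child_weight_ray_weight_nonneg: "N \<ge> 2 \<Longrightarrow> child_weight (ray_weight N lam) x y \<ge> 0"
  using ray_weight_pos[of N lam] by (simp add: child_weight_def less_imp_le)

lemma sum_tree_level_ray_weight:
  assumes "N \<ge> 2" and "k \<ge> 1"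
  shows "(\<Sum>y\<in>tree_level N k. ray_weight N lam y) = 2 * exp (lam * (real k - 1))"
proof -
  let ?r = "replicate k (0::nat)" and ?L = "tree_level N k" and ?E = "exp (lam * (real k - 1))"
  have r: "?r \<in> ?L"
    using replicate_in_tree_V[OF assms(1)] by (simp add: tree_level_def)
  have card: "card ?L \<ge> 2"
    using card_tree_level_ge_2[OF assms] .
  have "(\<Sum>y\<in>?L. ray_weight N lam y) = ray_weight N lam ?r + (\<Sum>y\<in>?L - {?r}. ray_weight N lam y)"
    by (rule sum.remove[OF finite_tree_level r])
  also have "(\<Sum>y\<in>?L - {?r}. ray_weight N lam y) = (\<Sum>y\<in>?L - {?r}. ?E / (real (card ?L) - 1))"
    by (rule sum.cong) (auto simp: ray_weight_def tree_level_def)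
  also have "\<dots> = ?E"
    using card r by simp
  finally show ?thesis
    by (simp add: ray_weight_def)
qed

lemma W_out_ray_weight:
  assumes "N \<ge> 2"
  shows "W_out (tree_V N) tree_adj (child_weight (ray_weight N lam)) [] n = (\<Sum>j\<le>n. 2 * exp (lam * real j))"
  by (simp add: W_out_child_weight sum_tree_level_ray_weight[OF assms])

lemma asymp_n2_sum_exp:
  fixes lam :: real
  assumes "lam > 0"
  shows "asymp_n2 (\<lambda>n. \<Sum>j\<le>n. 2 * exp (lam * real j)) (\<lambda>n. exp (lam * real n))"
  unfolding asymp_n2_def
proof (intro exI conjI allI impI)
  define q where "q = exp lam"
  have q: "q > 1"
    using assms by (simp add: q_def)
  have pow: "exp (lam * real j) = q ^ j" for j
    by (simp add: q_def exp_of_nat_mult[symmetric] mult.commute)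
  show "(1::real) > 0" and "2 * q / (q - 1) > 0"
    using q by simp_all
  fix n :: nat
  have "exp (lam * real n) \<le> 2 * exp (lam * real n)"
    by simp
  also have "\<dots> \<le> (\<Sum>j\<le>n. 2 * exp (lam * real j))"
    by (rule member_le_sum) auto
  finally show "1 * exp (lam * real n) \<le> (\<Sum>j\<le>n. 2 * exp (lam * real j))"
    by simp
  have "(\<Sum>j\<le>n. 2 * exp (lam * real j)) = 2 * ((q ^ Suc n - 1) / (q - 1))"
    using q by (simp add: pow sum_distrib_left[symmetric] sum_gp_strict lessThan_Suc_atMost[symmetric]
        field_simps)
  also have "\<dots> \<le> 2 * (q ^ Suc n / (q - 1))"
    using q by (simp add: divide_right_mono)
  also have "\<dots> = 2 * q / (q - 1) * exp (lam * real n)"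
    by (simp add: pow)
  finally show "(\<Sum>j\<le>n. 2 * exp (lam * real j)) \<le> 2 * q / (q - 1) * exp (lam * real n)" .
qed

section \<open>A supersolution decaying along a ray\<close>

definition lead_zeros :: "nat list \<Rightarrow> nat" where
  "lead_zeros xs = length (takeWhile (\<lambda>a. a = 0) xs)"

lemma lead_zeros_snoc:
  "lead_zeros (xs @ [a]) = (if (\<forall>b\<in>set xs. b = 0) \<and> a = 0 then Suc (length xs) else lead_zeros xs)"
proof (cases "\<forall>b\<in>set xs. b = 0")
  case True
  then have "takeWhile (\<lambda>a. a = 0) xs = xs"
    by simp
  with True show ?thesis
    by (simp add: lead_zeros_def takeWhile_append del: takeWhile_eq_all_conv)
qed (auto simp: lead_zeros_def takeWhile_append)

lemma lead_zeros_nbrs_off_ray: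
  assumes "x \<in> tree_V N" and "\<not> (\<forall>b\<in>set x. b = 0)" and "y \<in> nbrs (tree_V N) tree_adj x"
  shows "lead_zeros y = lead_zeros x"
proof -
  have "y \<in> tree_children N x \<or> x \<noteq> [] \<and> y = butlast x"
    using assms(3) by (simp add: nbrs_tree[OF assms(1)] split: if_splits)
  then show ?thesis
  proof
    assume "y \<in> tree_children N x"
    then show ?thesis
      using assms(2) by (auto simp: tree_children_def lead_zeros_snoc)
  next
    assume "x \<noteq> [] \<and> y = butlast x"
    then have "x = y @ [last x]"
      by simp
    then show ?thesis
      using assms(2) lead_zeros_snoc[of y "last x"] by auto
  qed
qed

definition ray_decay :: "real \<Rightarrow> real \<Rightarrow> nat list \<Rightarrow> real" where
  "ray_decay A c x = A + exp (- c * real (lead_zeros x))"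

lemma ray_decay_step:
  "ray_decay A c (replicate j 0) - ray_decay A c (replicate (Suc j) 0) = exp (- c * real j) * (1 - exp (- c))"
  by (simp add: ray_decay_def lead_zeros_def algebra_simps exp_add[symmetric])

lemma exp_decay_powr:
  fixes c m lam t d :: real
  assumes "c * (m - 1) = lam / 2" and "d \<ge> 0"
  shows "(exp (- c * t) * d) powr (m - 1) = exp (- lam * t / 2) * d powr (m - 1)"
proof -
  have "- c * t * (m - 1) = - (c * (m - 1)) * t"
    by (simp add: algebra_simps)
  also have "\<dots> = - lam * t / 2"
    unfolding assms(1) by simp
  finally have "- c * t * (m - 1) = - lam * t / 2" .
  then show ?thesis
    by (simp add: powr_mult exp_powr_real)
qed

lemma ray_child_in_tree_children:
  assumes "N \<ge> 2"
  shows "replicate (Suc k) 0 \<in> tree_children N (replicate k 0)"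
proof -
  have "replicate (Suc k) 0 = replicate k 0 @ [0::nat]"
    by (simp add: replicate_append_same)
  then show ?thesis
    using replicate_in_tree_V[OF assms, of "Suc k"] by (auto simp: tree_children_def)
qed

lemma ray_vmeas_bounds:
  assumes "N \<ge> 2" and "lam \<ge> 0"
  shows "exp (lam * real k) \<le> vmeas (tree_V N) tree_adj (child_weight (ray_weight N lam)) (replicate k 0)"
    and "vmeas (tree_V N) tree_adj (child_weight (ray_weight N lam)) (replicate k 0) \<le> 3 * exp (lam * real k)"
proof -
  let ?f = "ray_weight N lam" and ?x = "replicate k (0::nat)"
  have vm: "vmeas (tree_V N) tree_adj (child_weight ?f) ?x
      = (\<Sum>y\<in>tree_children N ?x. ?f y) + (if k = 0 then 0 else ?f ?x)"
    using vmeas_child_weight[OF replicate_in_tree_V[OF assms(1)]] by simp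
  have pos: "?f y > 0" for y
    using ray_weight_pos[OF assms(1)] .
  have "exp (lam * real k) = ?f (replicate (Suc k) 0)"
    by (simp add: ray_weight_def)
  also have "\<dots> \<le> (\<Sum>y\<in>tree_children N ?x. ?f y)"
    by (rule member_le_sum[OF ray_child_in_tree_children[OF assms(1)]])
      (use pos finite_tree_children in \<open>auto intro: less_imp_le\<close>)
  finally show "exp (lam * real k) \<le> vmeas (tree_V N) tree_adj (child_weight ?f) ?x"
    unfolding vm using pos[of ?x] by (cases "k = 0") simp_all
  have "(\<Sum>y\<in>tree_children N ?x. ?f y) \<le> (\<Sum>y\<in>tree_level N (Suc k). ?f y)"
    using tree_children_subset_level[of N ?x] pos
    by (intro sum_mono2[OF finite_tree_level]) (auto intro: less_imp_le)
  also have "\<dots> = 2 * exp (lam * real k)"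
    using sum_tree_level_ray_weight[OF assms(1), of "Suc k"] by simp
  finally have "(\<Sum>y\<in>tree_children N ?x. ?f y) \<le> 2 * exp (lam * real k)" .
  moreover have "?f ?x \<le> exp (lam * real k)"
    using assms(2) by (simp add: ray_weight_def mult_left_mono)
  ultimately show "vmeas (tree_V N) tree_adj (child_weight ?f) ?x \<le> 3 * exp (lam * real k)"
    unfolding vm using exp_ge_zero[of "lam * real k"] by (cases "k = 0") simp_all
qed

lemma ray_decay_tree_children:
  assumes "y \<in> tree_children N (replicate k 0)" and "y \<noteq> replicate (Suc k) 0"
  shows "ray_decay A c y = ray_decay A c (replicate k 0)"
proof -
  obtain a where y: "y = replicate k 0 @ [a]"
    using assms(1) by (auto simp: tree_children_def)
  have "a \<noteq> 0"
  proof
    assume "a = 0"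
    with y assms(2) show False
      by (simp add: replicate_append_same)
  qed
  with y show ?thesis
    by (simp add: ray_decay_def lead_zeros_snoc)
qed

lemma exp_weight_decay_powr:
  fixes c m lam t d :: real
  assumes "c * (m - 1) = lam / 2" and "d \<ge> 0"
  shows "exp (lam * t) * (exp (- c * t) * d) powr (m - 1) = exp (lam * t / 2) * d powr (m - 1)"
  using exp_decay_powr[OF assms, of t] by (simp add: exp_add[symmetric])

lemma ray_child_flux:
  fixes A c m lam :: real and k :: nat
  assumes "N \<ge> 2" and "c > 0" and "c * (m - 1) = lam / 2"
  defines "x \<equiv> replicate k (0::nat)" and "y \<equiv> replicate (Suc k) (0::nat)" and "u \<equiv> ray_decay A c"
  shows "child_weight (ray_weight N lam) x y * \<bar>u y - u x\<bar> powr (m - 2) * (u y - u x)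
    = - (exp (lam * real k / 2) * (1 - exp (- c)) powr (m - 1))"
proof -
  let ?d = "1 - exp (- c)"
  have diff: "u y - u x = - (exp (- c * real k) * ?d)"
    using ray_decay_step[of A c k] by (simp add: u_def x_def y_def)
  have weight: "child_weight (ray_weight N lam) x y = exp (lam * real k)"
    unfolding x_def y_def child_weight_child[OF ray_child_in_tree_children[OF assms(1)]]
    by (simp add: ray_weight_def)
  have "child_weight (ray_weight N lam) x y * \<bar>u y - u x\<bar> powr (m - 2) * (u y - u x)
      = exp (lam * real k) * (sgn (u y - u x) * \<bar>u y - u x\<bar> powr (m - 1))"
    by (simp only: weight mult.assoc abs_powr_mult_self)
  also have "\<dots> = - (exp (lam * real k) * (exp (- c * real k) * ?d) powr (m - 1))"
    unfolding diff using assms(2) by simp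
  also have "\<dots> = - (exp (lam * real k / 2) * ?d powr (m - 1))"
    using assms(2) by (simp only: exp_weight_decay_powr[OF assms(3)] diff_ge_0_iff_ge exp_le_one_iff)
  finally show ?thesis .
qed

lemma ray_parent_flux:
  fixes A c m lam :: real and j :: nat
  assumes "c > 0" and "c * (m - 1) = lam / 2"
  defines "x \<equiv> replicate (Suc j) (0::nat)" and "y \<equiv> replicate j (0::nat)" and "u \<equiv> ray_decay A c"
  shows "child_weight (ray_weight N lam) x y * \<bar>u y - u x\<bar> powr (m - 2) * (u y - u x)
    = exp (lam * real j / 2) * (1 - exp (- c)) powr (m - 1)"
proof -
  let ?d = "1 - exp (- c)"
  have diff: "u y - u x = exp (- c * real j) * ?d"
    using ray_decay_step[of A c j] by (simp add: u_def x_def y_def)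
  have parent: "y = butlast x"
    by (simp only: x_def y_def butlast_replicate_Suc)
  have "x \<noteq> []"
    by (simp add: x_def)
  have weight: "child_weight (ray_weight N lam) x y = exp (lam * real j)"
    unfolding parent child_weight_parent[OF \<open>x \<noteq> []\<close>] by (simp add: x_def ray_weight_def)
  have "child_weight (ray_weight N lam) x y * \<bar>u y - u x\<bar> powr (m - 2) * (u y - u x)
      = exp (lam * real j) * (sgn (u y - u x) * \<bar>u y - u x\<bar> powr (m - 1))"
    by (simp only: weight mult.assoc abs_powr_mult_self)
  also have "\<dots> = exp (lam * real j) * (exp (- c * real j) * ?d) powr (m - 1)"
    unfolding diff using assms(1) by simp
  also have "\<dots> = exp (lam * real j / 2) * ?d powr (m - 1)"
    using assms(1) by (simp only: exp_weight_decay_powr[OF assms(2)] diff_ge_0_iff_ge exp_le_one_iff)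
  finally show ?thesis .
qed

lemma ray_laplacian_numerator_le:
  fixes A m c lam :: real and k :: nat
  assumes "N \<ge> 2" and "c > 0" and "c * (m - 1) = lam / 2"
  defines "x \<equiv> replicate k (0::nat)" and "u \<equiv> ray_decay A c"
  shows "(\<Sum>y\<in>nbrs (tree_V N) tree_adj x.
            child_weight (ray_weight N lam) x y * \<bar>u y - u x\<bar> powr (m - 2) * (u y - u x))
      \<le> - (exp (lam * real k / 2) - exp (lam * (real k - 1) / 2)) * (1 - exp (- c)) powr (m - 1)"
proof -
  let ?g = "\<lambda>y. child_weight (ray_weight N lam) x y * \<bar>u y - u x\<bar> powr (m - 2) * (u y - u x)"
  let ?D = "(1 - exp (- c)) powr (m - 1)" and ?c = "replicate (Suc k) (0::nat)"
  have "(\<Sum>y\<in>tree_children N x - {?c}. ?g y) = 0"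
  proof (rule sum.neutral, intro ballI)
    fix y
    assume "y \<in> tree_children N x - {?c}"
    then have "u y = u x"
      unfolding x_def u_def by (blast intro: ray_decay_tree_children)
    then show "?g y = 0"
      by simp
  qed
  then have children: "(\<Sum>y\<in>tree_children N x. ?g y) = - (exp (lam * real k / 2) * ?D)"
    using sum.remove[OF finite_tree_children ray_child_in_tree_children[OF assms(1)], of ?g k]
      ray_child_flux[OF assms(1-3)] by (simp add: x_def u_def)
  have "x \<in> tree_V N"
    using replicate_in_tree_V[OF assms(1)] by (simp add: x_def)
  then have sum: "(\<Sum>y\<in>nbrs (tree_V N) tree_adj x. ?g y)
      = - (exp (lam * real k / 2) * ?D) + (if x = [] then 0 else ?g (butlast x))"
    by (simp only: sum_nbrs_tree children)
  show ?thesis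
  proof (cases k)
    case 0
    then show ?thesis
      unfolding sum by (simp add: x_def algebra_simps)
  next
    case (Suc j)
    then have "?g (butlast x) = exp (lam * (real k - 1) / 2) * ?D"
      using ray_parent_flux[OF assms(2,3), of N j A] unfolding x_def u_def Suc butlast_replicate_Suc
      by simp
    with Suc show ?thesis
      unfolding sum by (simp add: x_def algebra_simps)
  qed
qed

lemma ray_decay_nbrs_diff_le:
  fixes A c :: real and k :: nat
  assumes "N \<ge> 2" and "c > 0" and "y \<in> nbrs (tree_V N) tree_adj (replicate k 0)"
  defines "x \<equiv> replicate k (0::nat)" and "u \<equiv> ray_decay A c"
  shows "\<bar>u y - u x\<bar> \<le> exp (- c * (real k - 1)) * (1 - exp (- c))"
proof -
  have "y \<in> tree_children N x \<or> k \<ge> 1 \<and> y = butlast x"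
    using assms(3) replicate_in_tree_V[OF assms(1)]
    by (simp add: x_def nbrs_tree split: if_splits)
  then show ?thesis
  proof
    assume child: "y \<in> tree_children N x"
    show ?thesis
    proof (cases "y = replicate (Suc k) 0")
      case True
      then have "u x - u y = exp (- c * real k) * (1 - exp (- c))"
        using ray_decay_step[of A c k] by (simp add: x_def u_def)
      moreover have "exp (- c * real k) \<le> exp (- c * (real k - 1))"
        using assms(2) by simp
      ultimately show ?thesis
        using assms(2) by (simp add: abs_minus_commute)
    next
      case False
      then have "u y = u x"
        using child ray_decay_tree_children by (simp add: x_def u_def)
      then show ?thesis
        using assms(2) by simp
    qed
  next
    assume parent: "k \<ge> 1 \<and> y = butlast x"
    then obtain j where k: "k = Suc j"
      by (cases k) auto
    have "y = replicate j 0"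
      using parent unfolding x_def k butlast_replicate_Suc by simp
    then have "u y - u x = exp (- c * real j) * (1 - exp (- c))"
      using ray_decay_step[of A c j] by (simp add: x_def u_def k)
    then show ?thesis
      using assms(2) by (simp add: k)
  qed
qed

lemma ray_m_laplacian_le:
  fixes A c m lam :: real and k :: nat
  assumes "N \<ge> 2" and "c > 0" and "c * (m - 1) = lam / 2" and "lam \<ge> 0"
  defines "x \<equiv> replicate k (0::nat)" and "mu \<equiv> child_weight (ray_weight N lam)"
    and "u \<equiv> ray_decay A c"
  shows "m_laplacian (tree_V N) tree_adj mu m u x
    \<le> - (exp (lam * real k / 2) - exp (lam * (real k - 1) / 2)) * (1 - exp (- c)) powr (m - 1)
        / (3 * exp (lam * real k))"
proof -
  let ?vm = "vmeas (tree_V N) tree_adj mu x"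
  let ?a = "exp (lam * real k / 2) - exp (lam * (real k - 1) / 2)" and ?D = "(1 - exp (- c)) powr (m - 1)"
  have "- ?a * ?D \<le> 0"
    using assms(4) by (intro mult_nonpos_nonneg) (simp_all add: mult_left_mono divide_right_mono)
  have vm: "exp (lam * real k) \<le> ?vm" "?vm \<le> 3 * exp (lam * real k)"
    using ray_vmeas_bounds[OF assms(1,4)] by (simp_all add: mu_def x_def)
  then have "?vm > 0"
    by (smt (verit) exp_gt_zero)
  have "(\<Sum>y\<in>nbrs (tree_V N) tree_adj x. mu x y * \<bar>u y - u x\<bar> powr (m - 2) * (u y - u x))
      \<le> - ?a * ?D"
    using ray_laplacian_numerator_le[OF assms(1-3), where k = k and A = A]
    unfolding mu_def x_def u_def .
  with \<open>?vm > 0\<close> have "m_laplacian (tree_V N) tree_adj mu m u x \<le> - ?a * ?D / ?vm"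
    unfolding m_laplacian_def by (simp add: divide_right_mono)
  also have "\<dots> \<le> - ?a * ?D / (3 * exp (lam * real k))"
    using vm \<open>?vm > 0\<close> \<open>- ?a * ?D \<le> 0\<close> by (intro divide_left_mono_neg) simp_all
  finally show ?thesis .
qed

lemma ray_grad_norm_powr_le:
  fixes A c m lam :: real and k :: nat
  assumes "N \<ge> 2" and "m \<ge> 1" and "c > 0" and "c * (m - 1) = lam / 2"
  defines "x \<equiv> replicate k (0::nat)" and "mu \<equiv> child_weight (ray_weight N lam)"
    and "u \<equiv> ray_decay A c"
  shows "grad_norm (tree_V N) tree_adj mu u x powr (m - 1)
    \<le> exp (- lam * (real k - 1) / 2) * (1 - exp (- c)) powr (m - 1)"
proof -
  have "grad_norm (tree_V N) tree_adj mu u x \<le> exp (- c * (real k - 1)) * (1 - exp (- c))"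
    using ray_decay_nbrs_diff_le[OF assms(1,3)] child_weight_ray_weight_nonneg[OF assms(1)] assms(3)
    unfolding mu_def x_def u_def by (intro grad_norm_le) simp_all
  moreover have "grad_norm (tree_V N) tree_adj mu u x \<ge> 0"
    using child_weight_ray_weight_nonneg[OF assms(1)] unfolding mu_def by (rule grad_norm_nonneg)
  ultimately have "grad_norm (tree_V N) tree_adj mu u x powr (m - 1)
      \<le> (exp (- c * (real k - 1)) * (1 - exp (- c))) powr (m - 1)"
    using assms(2) by (intro powr_mono2) simp_all
  also have "\<dots> = exp (- lam * (real k - 1) / 2) * (1 - exp (- c)) powr (m - 1)"
    using assms(3) by (intro exp_decay_powr[OF assms(4)]) simp
  finally show ?thesis .
qed

lemma ray_supersolution:
  fixes A c m p lam :: real and k :: nat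
  assumes "N \<ge> 2" and "m > 1" and "p < 0" and "lam > 0" and "c * (m - 1) = lam / 2"
    and "A > 0" and "A powr p \<le> (exp (lam / 2) - 1) / (3 * exp lam)"
  defines "x \<equiv> replicate k (0::nat)" and "mu \<equiv> child_weight (ray_weight N lam)"
    and "u \<equiv> ray_decay A c"
  shows "m_laplacian (tree_V N) tree_adj mu m u x
      + u x powr p * grad_norm (tree_V N) tree_adj mu u x powr (m - 1) \<le> 0"
proof -
  let ?D = "(1 - exp (- c)) powr (m - 1)"
  define E where "E = exp (lam * real k / 2)"
  define H where "H = exp (lam / 2)"
  have "c * (m - 1) > 0"
    using assms(4,5) by simp
  then have c: "c > 0"
    using assms(2) by (simp add: zero_less_mult_iff)
  have E: "E > 0" and H: "H > 1"
    using assms(4) by (simp_all add: E_def H_def)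
  have exps: "exp (lam * real k) = E\<^sup>2" "exp (lam * (real k - 1) / 2) = E / H"
      "exp (- lam * (real k - 1) / 2) = H / E" "exp lam = H\<^sup>2"
    by (simp_all add: E_def H_def power2_eq_square exp_add[symmetric] exp_diff[symmetric]
        diff_divide_distrib right_diff_distrib)
  have lap: "m_laplacian (tree_V N) tree_adj mu m u x \<le> - (E - E / H) * ?D / (3 * E\<^sup>2)"
    using ray_m_laplacian_le[OF assms(1) c assms(5), where k = k and A = A] assms(4)
    unfolding mu_def x_def u_def E_def[symmetric] exps by simp
  have grad: "grad_norm (tree_V N) tree_adj mu u x powr (m - 1) \<le> H / E * ?D"
    using ray_grad_norm_powr_le[OF assms(1) _ c assms(5), where k = k and A = A] assms(2)
    unfolding mu_def x_def u_def exps by simp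
  have "u x powr p \<le> A powr p"
    using assms(3,6) by (intro powr_mono2') (simp_all add: u_def ray_decay_def)
  also have "\<dots> \<le> (H - 1) / (3 * H\<^sup>2)"
    using assms(7) by (simp add: H_def exps)
  finally have "u x powr p * grad_norm (tree_V N) tree_adj mu u x powr (m - 1)
      \<le> (H - 1) / (3 * H\<^sup>2) * (H / E * ?D)"
    using grad H by (intro mult_mono) simp_all
  with lap have "m_laplacian (tree_V N) tree_adj mu m u x
      + u x powr p * grad_norm (tree_V N) tree_adj mu u x powr (m - 1)
      \<le> - (E - E / H) * ?D / (3 * E\<^sup>2) + (H - 1) / (3 * H\<^sup>2) * (H / E * ?D)"
    by linarith
  also have "\<dots> = 0"
    using E H by (simp add: field_simps power2_eq_square)
  finally show ?thesis .
qed

lemma nontrivial_pos_solution_ray_decay: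
  fixes A c m p lam :: real
  assumes "N \<ge> 2" and "m > 1" and "p < 0" and "lam > 0" and "c * (m - 1) = lam / 2"
    and "A > 0" and "A powr p \<le> (exp (lam / 2) - 1) / (3 * exp lam)"
  shows "nontrivial_pos_solution (tree_V N) tree_adj (child_weight (ray_weight N lam)) m p (m - 1)
    (ray_decay A c)"
  unfolding nontrivial_pos_solution_def
proof (intro conjI ballI)
  have "c * (m - 1) > 0"
    using assms(4,5) by simp
  then have "c > 0"
    using assms(2) by (simp add: zero_less_mult_iff)
  have "ray_decay A c [] \<noteq> ray_decay A c [0]"
    using \<open>c > 0\<close> by (simp add: ray_decay_def lead_zeros_def)
  moreover have "[] \<in> tree_V N" and "[0] \<in> tree_V N"
    using replicate_in_tree_V[OF assms(1), of 0] replicate_in_tree_V[OF assms(1), of 1] by simp_all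
  ultimately show "\<exists>x\<in>tree_V N. \<exists>y\<in>tree_V N. ray_decay A c x \<noteq> ray_decay A c y"
    by blast
next
  fix x
  assume x: "x \<in> tree_V N"
  show "ray_decay A c x > 0"
    using assms(6) by (simp add: ray_decay_def add_pos_pos)
  show "m_laplacian (tree_V N) tree_adj (child_weight (ray_weight N lam)) m (ray_decay A c) x
      + ray_decay A c x powr p
        * grad_norm (tree_V N) tree_adj (child_weight (ray_weight N lam)) (ray_decay A c) x powr (m - 1)
      \<le> 0"
  proof (cases "\<forall>b\<in>set x. b = 0")
    case True
    then have "x = replicate (length x) 0"
      by (simp add: list_eq_iff_nth_eq)
    then show ?thesis
      using ray_supersolution[OF assms, where k = "length x"] by simp
  next
    case False
    then have "ray_decay A c y = ray_decay A c x" if "y \<in> nbrs (tree_V N) tree_adj x" for y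
      using lead_zeros_nbrs_off_ray[OF x False that] by (simp add: ray_decay_def)
    then show ?thesis
      by (simp add: m_laplacian_eq_0_if_const_nbrs grad_norm_eq_0_if_const_nbrs)
  qed
qed

theorem mainTheorem11:
  fixes N :: nat and m p q lam :: real
  assumes "N \<ge> 2" and "m > 1" and "p < 0" and "q = m - 1" and "lam > 0"
  shows "\<exists>mu. is_weight (tree_V N) tree_adj mu \<and>
           asymp_n2 (W_out (tree_V N) tree_adj mu []) (\<lambda>n. exp (lam * real n)) \<and>
           (\<exists>u. nontrivial_pos_solution (tree_V N) tree_adj mu m p q u)"
proof (intro exI conjI)
  let ?mu = "child_weight (ray_weight N lam)"
  show "is_weight (tree_V N) tree_adj ?mu"
    using ray_weight_pos[OF assms(1)] by (rule is_weight_child_weight)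
  show "asymp_n2 (W_out (tree_V N) tree_adj ?mu []) (\<lambda>n. exp (lam * real n))"
    unfolding W_out_ray_weight[OF assms(1)] using assms(5) by (rule asymp_n2_sum_exp)
  define \<kappa> where "\<kappa> = (exp (lam / 2) - 1) / (3 * exp lam)"
  have "\<kappa> > 0"
    using assms(5) by (simp add: \<kappa>_def)
  then have "\<kappa> powr (1 / p) > 0" and "(\<kappa> powr (1 / p)) powr p = \<kappa>"
    using assms(3) by (simp_all add: powr_powr)
  moreover have "lam / (2 * (m - 1)) * (m - 1) = lam / 2"
    using assms(2) by (simp add: field_simps)
  ultimately show "nontrivial_pos_solution (tree_V N) tree_adj ?mu m p q
      (ray_decay (\<kappa> powr (1 / p)) (lam / (2 * (m - 1))))"
    unfolding assms(4) using assms(1-3,5)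
    by (intro nontrivial_pos_solution_ray_decay) (simp_all add: \<kappa>_def)
qed

end
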